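(* Let $p$ be a prime and let $A$ be a sequence of length $4p-4$ over $(\mathbb{Z}/p\mathbb{Z})^2$ which contains no zero-sum subsequence of length $p$ and in which every element has multiplicity $<\frac{p}{2}$. Then no (affine) line in $(\mathbb{Z}/p\mathbb{Z})^2$ contains $\frac{3p}{2}$ elements of $A$, i.e. for every line $\ell$ the number of terms of $A$ (counted with multiplicity) lying on $\ell$ is less than $\frac{3p}{2}$.
   Context: Sequences are finite, unordered, may contain repeated elements; a zero-sum subsequence is a subsequence (terms at distinct positions) whose terms sum to $0$. The multiplicity of an element is its number of occurrences. *)

theory Defs
  imports "HOL-Library.Multiset" "HOL-Computational_Algebra.Primes" Complex_Main
begin

text \<open>Elements of (Z/pZ)^2 are represented by their canonical representatives:
  pairs of integers with both components in {0..<p}.\<close>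
definition zp2 :: "int \<Rightarrow> (int \<times> int) set" where
  "zp2 p = {0..<p} \<times> {0..<p}"

definition zero_sum_zp2 :: "int \<Rightarrow> (int \<times> int) multiset \<Rightarrow> bool" where
  "zero_sum_zp2 p B \<longleftrightarrow>
     (\<Sum>\<^sub># (image_mset fst B)) mod p = 0 \<and> (\<Sum>\<^sub># (image_mset snd B)) mod p = 0"

definition line_zp2 :: "int \<Rightarrow> (int \<times> int) set \<Rightarrow> bool" where
  "line_zp2 p L \<longleftrightarrow> (\<exists>a b c. \<not> (a mod p = 0 \<and> b mod p = 0) \<and>
      L = {x \<in> zp2 p. (a * fst x + b * snd x - c) mod p = 0})"

end

theory Submission
  imports Defs "HOL-Number_Theory.Cong"
begin

(* Suppose a line l carries a subsequence S of A of length n >= 3p/2. Projecting to a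
   coordinate axis not parallel to l is injective on l, so S becomes a sequence over Z/pZ of
   length n whose multiplicities are below p/2 <= n - p. For such a sequence the residues of
   the sums of its (n - p)-term subsequences cover Z/pZ: peeling off one layer of distinct
   elements at a time, this follows from the Cauchy-Davenport theorem, which in turn follows
   by induction along Dyson's e-transform. One of these sums is therefore congruent to the total sum, so the
   complementary p terms have zero sum in that coordinate, and since they lie on l their other
   coordinate sum vanishes as well. *)

lemma inj_on_shift_mod:
  fixes p e :: int
  shows "inj_on (\<lambda>x. (x + e) mod p) {0..<p}"
proof
  fix x y assume "x \<in> {0..<p}" "y \<in> {0..<p}" "(x + e) mod p = (y + e) mod p"
  then show "x = y" by (metis atLeastLessThan_iff cong_add_rcancel cong_def mod_pos_pos_trivial)
qed

lemma shift_mod_image_residues: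
  fixes p e :: int
  assumes "p > 0"
  shows "(\<lambda>x. (x + e) mod p) ` {0..<p} = {0..<p}"
proof (rule card_seteq)
  show "(\<lambda>x. (x + e) mod p) ` {0..<p} \<subseteq> {0..<p}" using assms by auto
  show "card {0..<p} \<le> card ((\<lambda>x. (x + e) mod p) ` {0..<p})"
    by (simp add: card_image inj_on_shift_mod)
qed simp

lemma shift_closed_eq_residues:
  fixes p d :: int
  assumes "prime p" "X \<subseteq> {0..<p}" "x0 \<in> X" "\<not> p dvd d"
    and closed: "\<And>x. x \<in> X \<Longrightarrow> (x + d) mod p \<in> X"
  shows "X = {0..<p}"
proof
  have orbit: "(x0 + int n * d) mod p \<in> X" for n :: nat
  proof (induction n)
    case 0
    then show ?case using assms(2,3) by auto
  next
    case (Suc n)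
    have "(x0 + int (Suc n) * d) mod p = ((x0 + int n * d) mod p + d) mod p"
      unfolding mod_add_left_eq by (simp add: algebra_simps)
    then show ?case using closed[OF Suc] by simp
  qed
  have "coprime d p"
    using assms(1,4) by (metis prime_imp_coprime coprime_commute)
  then obtain u where u: "[d * u = 1] (mod p)" using cong_solve_coprime_int by blast
  show "{0..<p} \<subseteq> X"
  proof
    fix z assume z: "z \<in> {0..<p}"
    have "p > 0" using assms(1) prime_gt_0_int by blast
    then have n: "int (nat ((u * (z - x0)) mod p)) = (u * (z - x0)) mod p" by simp
    have "[x0 + (u * (z - x0)) mod p * d = x0 + u * (z - x0) * d] (mod p)"
      by (intro cong_add cong_mult cong_refl) (simp add: cong_def)
    also have "x0 + u * (z - x0) * d = x0 + (d * u) * (z - x0)"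
      by (simp add: algebra_simps)
    also have "[x0 + (d * u) * (z - x0) = z] (mod p)"
      using cong_add[OF cong_refl cong_mult[OF u cong_refl], of x0 "z - x0"] by simp
    finally show "z \<in> X"
      using orbit[of "nat ((u * (z - x0)) mod p)"] z by (simp add: n cong_def)
  qed
qed (fact assms(2))

definition sumset_mod :: "int \<Rightarrow> int set \<Rightarrow> int set \<Rightarrow> int set" where
  "sumset_mod p X Y = (\<lambda>(x, y). (x + y) mod p) ` (X \<times> Y)"

lemma sumset_mod_subset_residues: "p > 0 \<Longrightarrow> sumset_mod p X Y \<subseteq> {0..<p}"
  by (auto simp: sumset_mod_def)

lemma sumset_modI: "x \<in> X \<Longrightarrow> y \<in> Y \<Longrightarrow> (x + y) mod p \<in> sumset_mod p X Y"
  unfolding sumset_mod_def by (rule image_eqI[of _ _ "(x, y)"]) auto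

lemma sumset_mod_singleton: "sumset_mod p X {y} = (\<lambda>x. (x + y) mod p) ` X"
  by (auto simp: sumset_mod_def)

lemma sumset_mod_mono:
  "X \<subseteq> X' \<Longrightarrow> Y \<subseteq> Y' \<Longrightarrow> sumset_mod p X Y \<subseteq> sumset_mod p X' Y'"
  by (auto simp: sumset_mod_def)

lemma sumset_mod_residues_left:
  fixes p :: int
  assumes "p > 0" "y \<in> Y"
  shows "sumset_mod p {0..<p} Y = {0..<p}"
proof -
  have "{0..<p} \<subseteq> sumset_mod p {0..<p} Y"
    using sumset_mod_mono[of "{0..<p}" "{0..<p}" "{y}" Y p] assms shift_mod_image_residues[OF assms(1)]
    by (simp add: sumset_mod_singleton)
  then show ?thesis using sumset_mod_subset_residues[OF assms(1)] by blast
qed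

lemma sumset_mod_dyson_transform_subset:
  "sumset_mod p (X \<union> (\<lambda>y. (y + e) mod p) ` Y) {y \<in> Y. (y + e) mod p \<in> X}
     \<subseteq> sumset_mod p X Y"
proof
  fix z assume "z \<in> sumset_mod p (X \<union> (\<lambda>y. (y + e) mod p) ` Y) {y \<in> Y. (y + e) mod p \<in> X}"
  then obtain u v where u: "u \<in> X \<union> (\<lambda>y. (y + e) mod p) ` Y"
    and v: "v \<in> Y" "(v + e) mod p \<in> X" and z: "z = (u + v) mod p"
    by (auto simp: sumset_mod_def)
  show "z \<in> sumset_mod p X Y"
  proof (cases "u \<in> X")
    case True
    then show ?thesis unfolding z using v(1) by (rule sumset_modI)
  next
    case False
    then obtain w where w: "w \<in> Y" "u = (w + e) mod p" using u by blast
    have "z = ((v + e) mod p + w) mod p"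
      unfolding z w mod_add_left_eq by (simp only: ac_simps)
    then show ?thesis using sumset_modI[OF v(2) w(1)] by simp
  qed
qed

lemma card_dyson_transform:
  fixes p e :: int
  assumes "X \<subseteq> {0..<p}" "Y \<subseteq> {0..<p}"
  shows "card (X \<union> (\<lambda>y. (y + e) mod p) ` Y) + card {y \<in> Y. (y + e) mod p \<in> X}
    = card X + card Y"
proof -
  let ?f = "\<lambda>y. (y + e) mod p"
  have inj: "inj_on ?f Y" using inj_on_shift_mod assms(2) by (rule inj_on_subset)
  have fin: "finite X" "finite (?f ` Y)" using assms finite_subset by blast+
  have "X \<inter> ?f ` Y = ?f ` {y \<in> Y. ?f y \<in> X}" by blast
  moreover have "inj_on ?f {y \<in> Y. ?f y \<in> X}" using inj by (rule inj_on_subset) blast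
  ultimately have "card (X \<inter> ?f ` Y) = card {y \<in> Y. ?f y \<in> X}" by (simp add: card_image)
  moreover have "card X + card (?f ` Y) = card (X \<union> ?f ` Y) + card (X \<inter> ?f ` Y)"
    using fin by (rule card_Un_Int)
  ultimately show ?thesis using card_image[OF inj] by linarith
qed

theorem cauchy_davenport_mod:
  fixes p :: int
  assumes "prime p" "X \<subseteq> {0..<p}" "Y \<subseteq> {0..<p}" "X \<noteq> {}" "Y \<noteq> {}"
  shows "min p (int (card X) + int (card Y) - 1) \<le> int (card (sumset_mod p X Y))"
  using assms(2-)
proof (induction "card Y" arbitrary: X Y rule: less_induct)
  case less
  have p: "p > 0" using assms(1) prime_gt_0_int by blast
  have fin: "finite Y" "finite (sumset_mod p X Y)"
    using finite_subset[OF less.prems(2)] finite_subset[OF sumset_mod_subset_residues[OF p]] by auto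
  obtain y0 where y0: "y0 \<in> Y" using less.prems by blast
  show ?case
  proof (cases "Y = {y0}")
    case True
    have "inj_on (\<lambda>x. (x + y0) mod p) X" using inj_on_shift_mod less.prems(1) by (rule inj_on_subset)
    then show ?thesis by (simp add: True sumset_mod_singleton card_image)
  next
    case False
    then obtain y1 where y1: "y1 \<in> Y" "y1 \<noteq> y0" using y0 by blast
    show ?thesis
    proof (cases "\<forall>a\<in>X. \<forall>b\<in>Y. \<forall>y\<in>Y. (y + a - b) mod p \<in> X")
      case closed: True
      have "y1 mod p \<noteq> y0 mod p" using y1 y0 less.prems(2) by (auto simp: subset_iff)
      then have "\<not> p dvd (y1 - y0)" by (simp add: mod_eq_dvd_iff)
      moreover obtain x0 where "x0 \<in> X" using less.prems(3) by blast
      ultimately have "X = {0..<p}"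
        using shift_closed_eq_residues[OF assms(1) less.prems(1)] closed y1(1) y0
        by (metis add.commute add_diff_eq)
      then show ?thesis using sumset_mod_residues_left[OF p y0] p by simp
    next
      case False
      then obtain a b y where transform: "a \<in> X" "b \<in> Y" "y \<in> Y" "(y + a - b) mod p \<notin> X"
        by blast
      define e where "e = a - b"
      define X' where "X' = X \<union> (\<lambda>y. (y + e) mod p) ` Y"
      define Y' where "Y' = {y \<in> Y. (y + e) mod p \<in> X}"
      have "b \<in> Y'" using transform(1,2) less.prems(1) by (auto simp: Y'_def e_def)
      then have Y'_ne: "Y' \<noteq> {}" by blast
      have "y \<notin> Y'" using transform(4) by (simp add: Y'_def e_def add_diff_eq)
      then have Y'_sub: "Y' \<subset> Y" using transform(3) by (auto simp: Y'_def)
      have X'_range: "X' \<subseteq> {0..<p}" and X'_ne: "X' \<noteq> {}"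
        using less.prems p by (auto simp: X'_def)
      have "min p (int (card X') + int (card Y') - 1) \<le> int (card (sumset_mod p X' Y'))"
        using Y'_sub fin(1) less.prems(2)
        by (intro less.hyps[OF _ X'_range _ X'_ne Y'_ne]) (auto simp: psubset_card_mono)
      moreover have "card (sumset_mod p X' Y') \<le> card (sumset_mod p X Y)"
        unfolding X'_def Y'_def by (rule card_mono[OF fin(2) sumset_mod_dyson_transform_subset])
      moreover have "card X' + card Y' = card X + card Y"
        using card_dyson_transform less.prems(1,2) unfolding X'_def Y'_def by blast
      ultimately show ?thesis by linarith
    qed
  qed
qed

definition subsums_mod :: "int \<Rightarrow> int multiset \<Rightarrow> nat \<Rightarrow> int set" where
  "subsums_mod p S k = {(\<Sum>\<^sub># T) mod p | T. T \<subseteq># S \<and> size T = k}"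

lemma subsums_mod_subset_residues: "p > 0 \<Longrightarrow> subsums_mod p S k \<subseteq> {0..<p}"
  by (auto simp: subsums_mod_def)

lemma subsums_mod_empty_0: "subsums_mod p {#} 0 = {0}"
  by (auto simp: subsums_mod_def)

lemma mset_set_subseteq_mset: "B \<subseteq> set_mset S \<Longrightarrow> mset_set B \<subseteq># S"
  using subset_imp_msubset_mset_set mset_set_set_mset_msubset
  by (metis finite_set_mset subset_mset.order_trans)

lemma ex_set_lowering_max_count:
  assumes "\<forall>x. count S x \<le> Suc k" "Suc k \<le> size S"
  obtains B where "B \<noteq> {}" "B \<subseteq> set_mset S" "card B + k \<le> size S"
    "\<forall>x. count (S - mset_set B) x \<le> k"
proof (cases "{x. count S x = Suc k} = {}")
  case True
  have "S \<noteq> {#}" using assms(2) by auto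
  then obtain x0 where "x0 \<in># S" by blast
  moreover have "count S x \<le> k" for x using True assms(1)[rule_format, of x] by (auto simp: le_Suc_eq)
  then have "\<forall>x. count (S - mset_set {x0}) x \<le> k" by (auto intro: le_trans[OF diff_le_self])
  ultimately show ?thesis using assms(2) by (intro that[of "{x0}"]) auto
next
  case False
  define M where "M = {x. count S x = Suc k}"
  have M_sub: "M \<subseteq> set_mset S" by (auto simp: M_def simp flip: count_greater_zero_iff)
  then have fin: "finite M" using finite_subset by blast
  have "card M * Suc k = (\<Sum>x\<in>M. count S x)" by (simp add: M_def)
  also have "\<dots> \<le> (\<Sum>x\<in>set_mset S. count S x)" using M_sub by (intro sum_mono2) auto
  also have "\<dots> = size S" by (simp add: size_multiset_overloaded_eq)
  finally have "card M * Suc k \<le> size S" .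
  moreover have "card M \<ge> 1" using False fin by (simp add: M_def Suc_le_eq card_gt_0_iff)
  then have "card M + k \<le> card M * Suc k" using mult_le_mono1[of 1 "card M" k] by simp
  ultimately have "card M + k \<le> size S" by linarith
  moreover have "count (S - mset_set M) x \<le> k" for x
    using assms(1)[rule_format, of x] fin by (cases "x \<in> M") (auto simp: M_def count_mset_set)
  ultimately show ?thesis using False M_sub by (intro that[of M]) (auto simp: M_def)
qed

lemma sumset_mod_subsums_mod_subset:
  assumes "finite B" "B \<subseteq> set_mset S"
  shows "sumset_mod p B (subsums_mod p (S - mset_set B) k) \<subseteq> subsums_mod p S (Suc k)"
proof
  fix z assume "z \<in> sumset_mod p B (subsums_mod p (S - mset_set B) k)"
  then obtain b T where b: "b \<in> B" and T: "T \<subseteq># S - mset_set B" "size T = k"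
    and z: "z = (b + (\<Sum>\<^sub># T) mod p) mod p"
    by (auto simp: sumset_mod_def subsums_mod_def)
  have "mset_set B \<subseteq># S" using assms(2) by (rule mset_set_subseteq_mset)
  moreover have "T + {#b#} \<subseteq># (S - mset_set B) + mset_set B"
    using T(1) b assms(1) by (intro subset_mset.add_mono) auto
  ultimately have "add_mset b T \<subseteq># S" by simp
  moreover have "z = (\<Sum>\<^sub># (add_mset b T)) mod p" using z by (simp add: mod_add_right_eq)
  ultimately show "z \<in> subsums_mod p S (Suc k)"
    using T(2) by (auto simp: subsums_mod_def intro!: exI[of _ "add_mset b T"])
qed

lemma card_subsums_mod_ge:
  fixes p :: int
  assumes "prime p" "set_mset S \<subseteq> {0..<p}" "k \<le> size S" "\<forall>x. count S x \<le> k"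
  shows "min p (int (size S) - int k + 1) \<le> int (card (subsums_mod p S k))"
  using assms(2-)
proof (induction k arbitrary: S)
  case 0
  then have "S = {#}" by (simp add: multiset_eq_iff)
  then show ?case by (simp add: subsums_mod_empty_0)
next
  case (Suc k)
  have p: "p > 0" using assms(1) prime_gt_0_int by blast
  obtain B where B: "B \<noteq> {}" "B \<subseteq> set_mset S" "card B + k \<le> size S"
    and count_S': "\<forall>x. count (S - mset_set B) x \<le> k"
    using ex_set_lowering_max_count Suc.prems(2,3) by blast
  define S' where "S' = S - mset_set B"
  have fin_B: "finite B" using B(2) finite_subset by blast
  have size_S': "size S' = size S - card B"
    using mset_set_subseteq_mset[OF B(2)] by (simp add: S'_def size_Diff_submset)
  have range_S': "set_mset S' \<subseteq> {0..<p}" using Suc.prems(1) by (auto simp: S'_def dest: in_diffD)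
  have IH: "min p (int (size S') - int k + 1) \<le> int (card (subsums_mod p S' k))"
    using Suc.IH[OF range_S'] size_S' B(3) count_S' by (simp add: S'_def)
  then have "subsums_mod p S' k \<noteq> {}" using size_S' B(3) p by auto
  then have "min p (int (card B) + int (card (subsums_mod p S' k)) - 1)
      \<le> int (card (sumset_mod p B (subsums_mod p S' k)))"
    using cauchy_davenport_mod[OF assms(1) _ subsums_mod_subset_residues[OF p] B(1)] B(2) Suc.prems(1)
    by blast
  also have "\<dots> \<le> int (card (subsums_mod p S (Suc k)))"
    unfolding S'_def of_nat_le_iff
    by (rule card_mono[OF finite_subset[OF subsums_mod_subset_residues[OF p]]
          sumset_mod_subsums_mod_subset[OF fin_B B(2)]]) simp
  finally have CD: "min p (int (card B) + int (card (subsums_mod p S' k)) - 1)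
      \<le> int (card (subsums_mod p S (Suc k)))" .
  have "card B > 0" using fin_B B(1) by (simp add: card_gt_0_iff)
  moreover have "int (size S') = int (size S) - int (card B)" using size_S' B(3) by simp
  ultimately have "min p (int (size S) - int (Suc k) + 1)
      \<le> min p (int (card B) + int (card (subsums_mod p S' k)) - 1)"
    using IH by linarith
  then show ?case using CD by (rule order_trans)
qed

lemma ex_zero_sum_submset_mod:
  fixes p :: int and S :: "int multiset"
  assumes "prime p" "set_mset S \<subseteq> {0..<p}" "p < int (size S)"
    and "\<forall>x. count S x \<le> size S - nat p"
  shows "\<exists>T. T \<subseteq># S \<and> int (size T) = p \<and> p dvd \<Sum>\<^sub># T"
proof -
  have p: "p > 0" using assms(1) prime_gt_0_int by blast
  define k where "k = size S - nat p"
  have k: "int k = int (size S) - p" using assms(3) p by (simp add: k_def of_nat_diff)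
  have k_le: "k \<le> size S" by (simp add: k_def)
  have "min p (int (size S) - int k + 1) \<le> int (card (subsums_mod p S k))"
    using card_subsums_mod_ge[OF assms(1,2) k_le] assms(4) by (simp add: k_def)
  then have "card {0..<p} \<le> card (subsums_mod p S k)" using k by simp
  then have "subsums_mod p S k = {0..<p}"
    by (intro card_seteq subsums_mod_subset_residues[OF p]) simp_all
  then have "(\<Sum>\<^sub># S) mod p \<in> subsums_mod p S k" using p by simp
  then obtain U where U: "U \<subseteq># S" "size U = k" "(\<Sum>\<^sub># U) mod p = (\<Sum>\<^sub># S) mod p"
    by (auto simp: subsums_mod_def)
  have "\<Sum>\<^sub># S = \<Sum>\<^sub># (S - U) + \<Sum>\<^sub># U"
    using U(1) by (metis subset_mset.diff_add sum_mset.union)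
  then have "p dvd \<Sum>\<^sub># (S - U)" using U(3) by (metis add_diff_cancel_right' mod_eq_dvd_iff)
  moreover have "int (size (S - U)) = p"
    using U(1,2) k k_le by (simp add: size_Diff_submset of_nat_diff)
  ultimately show ?thesis by (intro exI[of _ "S - U"]) simp
qed

lemma subseteq_image_mset_iff:
  "R \<subseteq># image_mset f S \<longleftrightarrow> (\<exists>B. B \<subseteq># S \<and> image_mset f B = R)"
proof
  show "R \<subseteq># image_mset f S \<Longrightarrow> \<exists>B. B \<subseteq># S \<and> image_mset f B = R"
  proof (induction S arbitrary: R)
    case empty
    then show ?case by simp
  next
    case (add x S)
    show ?case
    proof (cases "f x \<in># R")
      case True
      then obtain R' where R: "R = add_mset (f x) R'" by (blast dest: multi_member_split)
      then obtain B where "B \<subseteq># S" "image_mset f B = R'" using add by auto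
      then show ?thesis using R by (intro exI[of _ "add_mset x B"]) auto
    next
      case False
      then have "R \<subseteq># image_mset f S" using add.prems
        by (metis Diff_eq_empty_iff_mset image_mset_add_mset minus_add_mset_if_not_in_lhs)
      then obtain B where B: "B \<subseteq># S" "image_mset f B = R" using add.IH by blast
      moreover have "B \<subseteq># add_mset x S"
        using B(1) by (meson multi_psub_of_add_self subset_mset.le_less subset_mset.trans)
      ultimately show ?thesis by blast
    qed
  qed
qed (auto intro: image_mset_subseteq_mono)

lemma count_image_mset_le_if_inj_on:
  assumes "inj_on f (set_mset S)" "\<forall>x. count S x \<le> m"
  shows "count (image_mset f S) y \<le> m"
proof (cases "\<exists>x. x \<in># S \<and> f x = y")
  case True
  then obtain x where "x \<in># S" "f x = y" by blast
  then have "{x'. x' \<in># S \<and> y = f x'} = {x}" using assms(1) by (auto dest: inj_onD)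
  then show ?thesis using assms(2) by (simp add: count_image_mset')
next
  case False
  then have "y \<notin># image_mset f S" by auto
  then show ?thesis by (metis count_eq_zero_iff le0)
qed

lemma dvd_sum_mset_image:
  fixes f :: "'a \<Rightarrow> 'b::comm_semiring_1"
  shows "(\<forall>x\<in>#M. d dvd f x) \<Longrightarrow> d dvd (\<Sum>x\<in>#M. f x)"
  by (induction M) auto

lemma ex_zero_sum_submset_on_nonvertical_line:
  fixes p a b c :: int and S :: "(int \<times> int) multiset"
  assumes "prime p" "set_mset S \<subseteq> zp2 p"
    and on_line: "\<forall>x\<in>#S. p dvd a * fst x + b * snd x - c"
    and "\<not> p dvd b"
    and "p < int (size S)" "\<forall>x. count S x \<le> size S - nat p"
  shows "\<exists>B. B \<subseteq># S \<and> int (size B) = p \<and> zero_sum_zp2 p B"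
proof -
  have "inj_on fst (set_mset S)"
  proof
    fix x y assume xy: "x \<in> set_mset S" "y \<in> set_mset S" "fst x = fst y"
    have "p dvd (a * fst x + b * snd x - c) - (a * fst y + b * snd y - c)"
      using on_line xy(1,2) by (blast intro: dvd_diff)
    then have "p dvd b * (snd x - snd y)" using xy(3) by (simp add: algebra_simps)
    then have "snd x mod p = snd y mod p"
      using assms(1,4) by (simp add: prime_dvd_mult_iff mod_eq_dvd_iff)
    moreover have "snd x \<in> {0..<p}" "snd y \<in> {0..<p}"
      using xy(1,2) assms(2) by (auto simp: zp2_def mem_Times_iff)
    ultimately show "x = y" using xy(3) by (simp add: prod_eq_iff)
  qed
  then have counts: "\<forall>v. count (image_mset fst S) v \<le> size (image_mset fst S) - nat p"
    using count_image_mset_le_if_inj_on[OF _ assms(6)] by auto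
  have range: "set_mset (image_mset fst S) \<subseteq> {0..<p}"
    using assms(2) unfolding zp2_def by fastforce
  have "p < int (size (image_mset fst S))" using assms(5) by simp
  then obtain T where T: "T \<subseteq># image_mset fst S" "int (size T) = p" "p dvd \<Sum>\<^sub># T"
    using ex_zero_sum_submset_mod[OF assms(1) range _ counts] by blast
  then obtain B where B: "B \<subseteq># S" "image_mset fst B = T"
    by (auto simp: subseteq_image_mset_iff)
  have size_B: "int (size B) = p" using B(2) T(2) by auto
  have fst_B: "p dvd (\<Sum>x\<in>#B. fst x)" using B(2) T(3) by simp
  have "p dvd (\<Sum>x\<in>#B. a * fst x + b * snd x - c)"
    using on_line B(1) by (intro dvd_sum_mset_image) (auto dest: mset_subset_eqD)
  also have "(\<Sum>x\<in>#B. a * fst x + b * snd x - c)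
      = a * (\<Sum>x\<in>#B. fst x) + b * (\<Sum>x\<in>#B. snd x) - int (size B) * c"
    by (induction B) (simp_all add: algebra_simps)
  finally have "p dvd a * (\<Sum>x\<in>#B. fst x) + b * (\<Sum>x\<in>#B. snd x) - p * c"
    using size_B by simp
  moreover have "p dvd a * (\<Sum>x\<in>#B. fst x) - p * c"
    using fst_B by (simp add: dvd_diff dvd_mult)
  ultimately have "p dvd (a * (\<Sum>x\<in>#B. fst x) + b * (\<Sum>x\<in>#B. snd x) - p * c)
      - (a * (\<Sum>x\<in>#B. fst x) - p * c)"
    by (rule dvd_diff)
  then have "p dvd b * (\<Sum>x\<in>#B. snd x)" by simp
  then have "p dvd (\<Sum>x\<in>#B. snd x)" using assms(1,4) by (simp add: prime_dvd_mult_iff)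
  then show ?thesis using B(1) size_B fst_B by (auto simp: zero_sum_zp2_def dvd_eq_mod_eq_0)
qed

lemma ex_zero_sum_submset_on_line:
  fixes p :: int and S :: "(int \<times> int) multiset"
  assumes "prime p" "line_zp2 p L" "set_mset S \<subseteq> L"
    and "p < int (size S)" "\<forall>x. count S x \<le> size S - nat p"
  shows "\<exists>B. B \<subseteq># S \<and> int (size B) = p \<and> zero_sum_zp2 p B"
proof -
  obtain a b c where coeffs: "\<not> (a mod p = 0 \<and> b mod p = 0)"
    and L: "L = {x \<in> zp2 p. (a * fst x + b * snd x - c) mod p = 0}"
    using assms(2) unfolding line_zp2_def by blast
  have range: "set_mset S \<subseteq> zp2 p" using assms(3) L by blast
  have on_line: "\<forall>x\<in>#S. p dvd a * fst x + b * snd x - c"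
    using assms(3) L by (auto simp: dvd_eq_mod_eq_0)
  show ?thesis
  proof (cases "p dvd b")
    case False
    then show ?thesis
      using ex_zero_sum_submset_on_nonvertical_line[OF assms(1) range on_line _ assms(4,5)] by blast
  next
    case True
    then have "\<not> p dvd a" using coeffs by (simp add: dvd_eq_mod_eq_0)
    define S' where "S' = image_mset prod.swap S"
    have "set_mset S' \<subseteq> zp2 p" using range by (auto simp: S'_def zp2_def)
    moreover have "\<forall>x\<in>#S'. p dvd b * fst x + a * snd x - c"
      using on_line by (auto simp: S'_def add.commute)
    moreover have "p < int (size S')" using assms(4) by (simp add: S'_def)
    moreover have "\<forall>x. count S' x \<le> size S' - nat p"
      using count_image_mset_le_if_inj_on[OF inj_swap assms(5)] by (simp add: S'_def)
    ultimately obtain B' where B': "B' \<subseteq># S'" "int (size B') = p" "zero_sum_zp2 p B'"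
      using ex_zero_sum_submset_on_nonvertical_line[OF assms(1) _ _ \<open>\<not> p dvd a\<close>] by blast
    have "image_mset prod.swap B' \<subseteq># S"
      using image_mset_subseteq_mono[OF B'(1), of prod.swap]
      by (simp add: S'_def multiset.map_comp comp_def)
    moreover have "zero_sum_zp2 p (image_mset prod.swap B')"
      using B'(3) by (simp add: zero_sum_zp2_def multiset.map_comp comp_def)
    ultimately show ?thesis using B'(2) by (intro exI[of _ "image_mset prod.swap B'"]) simp
  qed
qed

theorem corollary2p4:
  fixes p :: int and A :: "(int \<times> int) multiset"
  assumes "prime p"
    and "set_mset A \<subseteq> zp2 p"
    and "int (size A) = 4 * p - 4"
    and "\<not> (\<exists>B. B \<subseteq># A \<and> int (size B) = p \<and> zero_sum_zp2 p B)"
    and "\<And>x. real (count A x) < real_of_int p / 2"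
  shows "\<forall>L. line_zp2 p L \<longrightarrow> real (size (filter_mset (\<lambda>x. x \<in> L) A)) < 3 * real_of_int p / 2"
proof (intro allI impI)
  fix L assume L: "line_zp2 p L"
  define S where "S = filter_mset (\<lambda>x. x \<in> L) A"
  show "real (size S) < 3 * real_of_int p / 2"
  proof (rule ccontr)
    assume "\<not> ?thesis"
    then have long: "3 * p \<le> 2 * int (size S)" by linarith
    have "p > 0" using assms(1) prime_gt_0_int by blast
    then have "p < int (size S)" using long by linarith
    moreover have "count S x \<le> size S - nat p" for x
    proof -
      have "real (count S x) < real_of_int p / 2" using assms(5)[of x] by (simp add: S_def)
      then have "int (count S x) \<le> int (size S) - p" using long by linarith
      then show ?thesis using \<open>p > 0\<close> by linarith
    qed
    ultimately obtain B where "B \<subseteq># S" "int (size B) = p" "zero_sum_zp2 p B"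
      using ex_zero_sum_submset_on_line[OF assms(1) L, of S] by (auto simp: S_def)
    moreover have "S \<subseteq># A" by (simp add: S_def multiset_filter_subset)
    ultimately show False using assms(4) subset_mset.order_trans by blast
  qed
qed

end
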